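(* Let $R$ be a commutative ring with identity containing the field $\mathbb{Q}$ of rational numbers as a subring with the same identity (equivalently, every nonzero integer is a unit in $R$). Then $R$ is a u-ring.
   Context: An ideal $I$ of $R$ is a u-ideal if whenever $I\subseteq I_1\cup\cdots\cup I_m$ for finitely many ideals $I_1,\dots,I_m$ of $R$, then $I\subseteq I_j$ for some $j$. A ring $R$ is a u-ring if every ideal of $R$ is a u-ideal. *)

theory Defs
  imports "HOL-Algebra.Algebra"
begin

definition u_ideal :: "'a set \<Rightarrow> ('a, 'b) ring_scheme \<Rightarrow> bool" where
  "u_ideal I R \<longleftrightarrow> ideal I R \<and>
     (\<forall>(m::nat) (J :: nat \<Rightarrow> 'a set).
        (\<forall>j<m. ideal (J j) R) \<longrightarrow> I \<subseteq> (\<Union>j<m. J j) \<longrightarrow> (\<exists>j<m. I \<subseteq> J j))"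

definition u_ring :: "('a, 'b) ring_scheme \<Rightarrow> bool" where
  "u_ring R \<longleftrightarrow> (\<forall>I. ideal I R \<longrightarrow> u_ideal I R)"

end

theory Submission
  imports Defs
begin

text \<open>If an ideal \<open>I\<close> is covered by \<open>J\<^sub>0, \<dots>, J\<^sub>m\<close> but by none of them alone, induction on \<open>m\<close>
  gives \<open>x \<in> I\<close> lying only in \<open>J\<^sub>m\<close> and \<open>y \<in> I - J\<^sub>m\<close>. The elements \<open>y + n x\<close> of \<open>I\<close> all avoid
  \<open>J\<^sub>m\<close>, so by pigeonhole two of them, \<open>y + a x\<close> and \<open>y + b x\<close>, lie in a common \<open>J\<^sub>j\<close> with \<open>j < m\<close>;
  then \<open>(a - b) x \<in> J\<^sub>j\<close>, and since \<open>a - b\<close> is a unit, \<open>x \<in> J\<^sub>j\<close>, a contradiction.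
  Any sequence \<open>s\<close> of scalars with unit differences can play the role of \<open>n\<close>.\<close>

lemma (in ring) ideal_minus_closed:
  "ideal J R \<Longrightarrow> a \<in> J \<Longrightarrow> b \<in> J \<Longrightarrow> a \<ominus> b \<in> J"
  unfolding a_minus_def
  by (simp add: additive_subgroup.a_closed additive_subgroup.a_inv_closed ideal.axioms(1))

lemma (in ring) ideal_Units_l_cancel:
  assumes "ideal J R" "u \<in> Units R" "x \<in> carrier R" "u \<otimes> x \<in> J"
  shows "x \<in> J"
proof -
  have "inv u \<otimes> (u \<otimes> x) \<in> J"
    using assms by (simp add: ideal.I_l_closed)
  moreover have "inv u \<otimes> (u \<otimes> x) = x"
    using assms(2,3) by (simp add: m_assoc[symmetric] Units_closed)
  ultimately show ?thesis by simp
qed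

lemma (in ring) mem_ideal_if_translates_in_Union_ideals:
  fixes s :: "nat \<Rightarrow> 'a" and J :: "nat \<Rightarrow> 'a set"
  assumes s: "\<And>n. s n \<in> carrier R" "\<And>a b. a \<noteq> b \<Longrightarrow> s a \<ominus> s b \<in> Units R"
    and J: "\<forall>j<m. ideal (J j) R"
    and x: "x \<in> carrier R" and y: "y \<in> carrier R"
    and translates: "\<And>n. y \<oplus> s n \<otimes> x \<in> (\<Union>j<m. J j)"
  shows "\<exists>j<m. x \<in> J j"
proof -
  have "\<forall>n. \<exists>j<m. y \<oplus> s n \<otimes> x \<in> J j"
    using translates by blast
  then obtain f where f: "\<And>n. f n < m \<and> y \<oplus> s n \<otimes> x \<in> J (f n)"
    by metis
  have "f ` {..m} \<subseteq> {..<m}"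
    using f by auto
  then have "card (f ` {..m}) \<le> m"
    by (metis card_lessThan card_mono finite_lessThan)
  then have "\<not> inj_on f {..m}"
    by (intro pigeonhole) simp
  then obtain a b where ab: "a \<noteq> b" "f a = f b"
    unfolding inj_on_def by blast
  let ?j = "f a"
  have ideal_J: "ideal (J ?j) R"
    using J f by blast
  have "(y \<oplus> s a \<otimes> x) \<ominus> (y \<oplus> s b \<otimes> x) \<in> J ?j"
    using f[of a] f[of b] ab(2) ideal_J by (simp add: ideal_minus_closed)
  moreover have "(y \<oplus> s a \<otimes> x) \<ominus> (y \<oplus> s b \<otimes> x) = (s a \<ominus> s b) \<otimes> x"
    using s(1)[of a] s(1)[of b] x y by (simp add: ring_simprules)
  ultimately have "x \<in> J ?j"
    using ideal_Units_l_cancel[OF ideal_J s(2)[OF ab(1)] x] by simp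
  then show ?thesis
    using f by blast
qed

lemma (in ring) ideal_subset_Union_ideals_imp_subset:
  fixes s :: "nat \<Rightarrow> 'a" and J :: "nat \<Rightarrow> 'a set"
  assumes s: "\<And>n. s n \<in> carrier R" "\<And>a b. a \<noteq> b \<Longrightarrow> s a \<ominus> s b \<in> Units R"
    and I: "ideal I R"
    and "\<forall>j<m. ideal (J j) R" "I \<subseteq> (\<Union>j<m. J j)"
  shows "\<exists>j<m. I \<subseteq> J j"
  using assms(4,5)
proof (induction m arbitrary: J)
  case 0
  have "\<zero> \<in> I"
    using I by (simp add: additive_subgroup.zero_closed ideal.axioms(1))
  then show ?case
    using "0.prems"(2) by auto
next
  case (Suc m)
  note J = Suc.prems(1) and cover = Suc.prems(2)
  have Jm: "ideal (J m) R"
    using J by simp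
  show ?case
  proof (rule ccontr)
    assume not_subset: "\<not> (\<exists>j<Suc m. I \<subseteq> J j)"
    then have "\<not> I \<subseteq> (\<Union>j<m. J j)"
      using Suc.IH J by (metis less_SucI)
    then obtain x where x: "x \<in> I" "\<And>j. j < m \<Longrightarrow> x \<notin> J j"
      by blast
    then have "x \<in> J m"
      using cover less_Suc_eq by blast
    obtain y where y: "y \<in> I" "y \<notin> J m"
      using not_subset by blast
    have carrier: "x \<in> carrier R" "y \<in> carrier R"
      using I x(1) y(1) by (auto dest: ideal.Icarr)
    have translates: "y \<oplus> s n \<otimes> x \<in> (\<Union>j<m. J j)" for n
    proof -
      have "s n \<otimes> x \<in> I"
        using ideal.I_l_closed[OF I x(1) s(1)] .
      then have in_I: "y \<oplus> s n \<otimes> x \<in> I"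
        using additive_subgroup.a_closed[OF ideal.axioms(1)[OF I] y(1)] by blast
      have "y \<oplus> s n \<otimes> x \<notin> J m"
      proof
        assume "y \<oplus> s n \<otimes> x \<in> J m"
        moreover have "s n \<otimes> x \<in> J m"
          using ideal.I_l_closed[OF Jm \<open>x \<in> J m\<close> s(1)] .
        ultimately have "(y \<oplus> s n \<otimes> x) \<ominus> s n \<otimes> x \<in> J m"
          by (rule ideal_minus_closed[OF Jm])
        moreover have "(y \<oplus> s n \<otimes> x) \<ominus> s n \<otimes> x = y"
          using carrier s(1)[of n] by (simp add: ring_simprules)
        ultimately show False
          using y(2) by simp
      qed
      moreover obtain j where "j < Suc m" "y \<oplus> s n \<otimes> x \<in> J j"
        using in_I cover by blast
      ultimately show ?thesis
        by (auto simp: less_Suc_eq)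
    qed
    have "\<exists>j<m. x \<in> J j"
      by (rule mem_ideal_if_translates_in_Union_ideals[OF s(1) s(2) _ carrier translates])
        (use J in auto)
    then show False
      using x(2) by blast
  qed
qed

theorem lemma7:
  fixes R :: "('a, 'b) ring_scheme" (structure)
  assumes "cring R"
    and "\<forall>n::int. n \<noteq> 0 \<longrightarrow> add_pow R n \<one>\<^bsub>R\<^esub> \<in> Units R"
  shows "u_ring R"
proof -
  interpret cring R by fact
  define s where "s n = add_pow R (int n) \<one>" for n
  have "s a \<ominus> s b = add_pow R (int a - int b) \<one>" for a b
    unfolding s_def a_minus_def by (simp add: add.int_pow_diff)
  then have "a \<noteq> b \<Longrightarrow> s a \<ominus> s b \<in> Units R" for a b
    using assms(2) by simp
  moreover have "s n \<in> carrier R" for n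
    unfolding s_def by simp
  ultimately show ?thesis
    unfolding u_ring_def u_ideal_def
    using ideal_subset_Union_ideals_imp_subset by blast
qed

end
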